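(* Let $k$ be an algebraically closed field of characteristic zero and let $(A,M)$ be a standard graded $k$-algebra, $A=A_0\oplus A_1\oplus\cdots$. If $A$ is not a principal ideal algebra, then the set $$\mathcal{E}=\{\,i\in\mathbb{N}\;:\;\text{there exist } N\ge 0 \text{ and a }k\text{-algebra homomorphism }\alpha:A\to k[t]/\langle t^{N+1}\rangle \text{ with } \dim_k\alpha(A_i)\ge 2\,\}$$ is finite and nonempty.
   Context: All algebras are commutative, unital and finite dimensional over $k$. A principal ideal algebra is a finite dimensional commutative $k$-algebra in which every ideal is principal. A finite dimensional non-negatively graded algebra $A=A_0\oplus A_1\oplus\cdots\oplus A_n$ is standard if $M=A_1\oplus\cdots\oplus A_n$ is a maximal ideal generated by elements of degree one. A truncated polynomial algebra is one of the form $k[t]/\langle t^{N+1}\rangle$. *)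

theory Defs
  imports "HOL-Computational_Algebra.Polynomial"
begin

definition alg_closed :: "'k::field itself \<Rightarrow> bool" where
  "alg_closed _ \<longleftrightarrow> (\<forall>p :: 'k poly. degree p \<ge> 1 \<longrightarrow> (\<exists>x. poly p x = 0))"

definition fd_algebra :: "('k::field \<Rightarrow> 'a::comm_ring_1 \<Rightarrow> 'a) \<Rightarrow> bool" where
  "fd_algebra scale \<longleftrightarrow>
     vector_space scale \<and>
     (\<forall>c x y. scale c (x * y) = scale c x * y) \<and>
     (\<exists>B. finite B \<and> module.span scale B = UNIV)"

definition is_ideal :: "'a::comm_ring_1 set \<Rightarrow> bool" where
  "is_ideal I \<longleftrightarrow> 0 \<in> I \<and> (\<forall>x\<in>I. \<forall>y\<in>I. x + y \<in> I) \<and> (\<forall>r. \<forall>x\<in>I. r * x \<in> I)"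

definition maximal_ideal :: "'a::comm_ring_1 set \<Rightarrow> bool" where
  "maximal_ideal M \<longleftrightarrow> is_ideal M \<and> M \<noteq> UNIV \<and>
     (\<forall>J. is_ideal J \<and> M \<subseteq> J \<longrightarrow> J = M \<or> J = UNIV)"

definition ideal_generated :: "'a::comm_ring_1 set \<Rightarrow> 'a set" where
  "ideal_generated S = \<Inter>{I. is_ideal I \<and> S \<subseteq> I}"

definition principal_ideal_ring :: "'a::comm_ring_1 itself \<Rightarrow> bool" where
  "principal_ideal_ring _ \<longleftrightarrow> (\<forall>I :: 'a set. is_ideal I \<longrightarrow> (\<exists>a. I = {r * a | r. True}))"

definition graded :: "('k::field \<Rightarrow> 'a::comm_ring_1 \<Rightarrow> 'a) \<Rightarrow> (nat \<Rightarrow> 'a set) \<Rightarrow> bool" where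
  "graded scale G \<longleftrightarrow>
     (\<forall>i. module.subspace scale (G i)) \<and>
     (\<forall>i j. \<forall>x\<in>G i. \<forall>y\<in>G j. x * y \<in> G (i + j)) \<and>
     (\<exists>n. (\<forall>i>n. G i = {0}) \<and>
          (\<forall>x. \<exists>!f. (\<forall>i. f i \<in> G i) \<and> x = (\<Sum>i\<le>n. f i)))"

definition irrelevant :: "(nat \<Rightarrow> 'a::comm_ring_1 set) \<Rightarrow> 'a set" where
  "irrelevant G = {x. \<exists>f m. (\<forall>i. f i \<in> G i) \<and> f 0 = 0 \<and> x = (\<Sum>i\<le>m. f i)}"

definition standard_graded :: "('k::field \<Rightarrow> 'a::comm_ring_1 \<Rightarrow> 'a) \<Rightarrow> (nat \<Rightarrow> 'a set) \<Rightarrow> bool" where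
  "standard_graded scale G \<longleftrightarrow> graded scale G \<and>
     maximal_ideal (irrelevant G) \<and> irrelevant G = ideal_generated (G 1)"

text \<open>k[t]/<t^(N+1)> is represented by canonical remainders modulo t^(N+1), i.e. polynomials
  of degree at most N, with multiplication followed by reduction mod t^(N+1).\<close>
definition trunc_hom :: "('k::field \<Rightarrow> 'a::comm_ring_1 \<Rightarrow> 'a) \<Rightarrow> nat \<Rightarrow> ('a \<Rightarrow> 'k poly) \<Rightarrow> bool" where
  "trunc_hom scale N \<alpha> \<longleftrightarrow>
     (\<forall>x. \<alpha> x mod [:0, 1:] ^ (N + 1) = \<alpha> x) \<and>
     (\<forall>x y. \<alpha> (x + y) = \<alpha> x + \<alpha> y) \<and>
     (\<forall>c x. \<alpha> (scale c x) = smult c (\<alpha> x)) \<and>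
     \<alpha> 1 = 1 \<and>
     (\<forall>x y. \<alpha> (x * y) = (\<alpha> x * \<alpha> y) mod [:0, 1:] ^ (N + 1))"

end

theory Submission
  imports Defs
begin

text \<open>
  Every homomorphism kills the pieces \<open>A\<^sub>i = 0\<close> above the top degree \<open>n\<close>, so the set lies in
  \<open>{0..n}\<close>. For nonemptiness, suppose first \<open>dim A\<^sub>1 \<le> 1\<close>, say \<open>A\<^sub>1 \<subseteq> k x\<close>. Then \<open>M = (x)\<close> with
  \<open>x\<close> nilpotent, and every element outside \<open>M\<close> is a unit of \<open>A\<^sub>0\<close> plus a nilpotent, hence a
  unit; so every nonzero element is a power of \<open>x\<close> times a unit and every ideal is generated
  by a power of \<open>x\<close>. Hence \<open>A\<^sub>1\<close> contains independent \<open>x, y\<close>. As \<open>A\<^sub>0 \<cong> A/M\<close> is a field that is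
  finite over the algebraically closed \<open>k\<close>, \<open>A\<^sub>0 = k\<close>, and with coordinate functionals
  \<open>\<phi>, \<psi>\<close> dual to \<open>x, y\<close> the map \<open>a \<mapsto> a\<^sub>0 + \<phi>(a\<^sub>1) t\<^sup>2 + \<psi>(a\<^sub>1) t\<^sup>3\<close> into \<open>k[t]/(t\<^sup>4)\<close> is a
  homomorphism, because products of two degree-one parts land in \<open>t\<^sup>4\<close>. It sends \<open>A\<^sub>1\<close> onto
  the span of \<open>t\<^sup>2\<close> and \<open>t\<^sup>3\<close>.
\<close>

section \<open>Truncated polynomial rings and local rings\<close>

interpretation smult_vs: vector_space "smult :: 'k::field \<Rightarrow> 'k poly \<Rightarrow> 'k poly"
  by unfold_locales (auto simp: smult_add_right smult_add_left)

lemma mod_X_power_eq_self: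
  fixes p :: "'k::field poly"
  assumes "degree p < m"
  shows "p mod [:0, 1:] ^ m = p"
  using assms by (simp add: mod_poly_less degree_power_eq)

lemma mult_mod_X4_no_linear_terms:
  "([:a0, 0, a2, a3:] * [:b0, 0, b2, b3:] :: 'k::field poly) mod [:0, 1:] ^ 4 =
     [:a0 * b0, 0, a0 * b2 + a2 * b0, a0 * b3 + a3 * b0:]"
proof -
  have "[:a0, 0, a2, a3:] * [:b0, 0, b2, b3:] =
      [:a0 * b0, 0, a0 * b2 + a2 * b0, a0 * b3 + a3 * b0:] +
      [:0, 1:] ^ 4 * [:a2 * b2, a2 * b3 + a3 * b2, a3 * b3:]"
    by (simp add: algebra_simps numeral_eq_Suc)
  moreover have "degree [:a0 * b0, 0, a0 * b2 + a2 * b0, a0 * b3 + a3 * b0:] < 4"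
    by simp
  ultimately show ?thesis
    by (simp only: mod_mult_self2 mod_X_power_eq_self)
qed

lemma maximal_ideal_invertible_modulo:
  fixes a :: "'a::comm_ring_1"
  assumes M: "maximal_ideal M" and a: "a \<notin> M"
  obtains m r where "m \<in> M" "1 = m + r * a"
proof -
  have M_ideal: "is_ideal M"
    using M by (simp add: maximal_ideal_def)
  define J where "J = {m + r * a | m r. m \<in> M}"
  have J_intro: "m + r * a \<in> J" if "m \<in> M" for m r
    unfolding J_def using that by blast
  have "is_ideal J"
    unfolding is_ideal_def
  proof safe
    show "0 \<in> J"
      using J_intro[of 0 0] M_ideal by (simp add: is_ideal_def)
  next
    fix x y assume "x \<in> J" "y \<in> J"
    then obtain m1 r1 m2 r2 where "x = m1 + r1 * a" "y = m2 + r2 * a" "m1 \<in> M" "m2 \<in> M"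
      unfolding J_def by blast
    moreover from this have "x + y = (m1 + m2) + (r1 + r2) * a"
      by (simp add: algebra_simps)
    ultimately show "x + y \<in> J"
      using J_intro M_ideal unfolding is_ideal_def by metis
  next
    fix r x assume "x \<in> J"
    then obtain m1 r1 where "x = m1 + r1 * a" "m1 \<in> M"
      unfolding J_def by blast
    moreover from this have "r * x = r * m1 + (r * r1) * a"
      by (simp add: algebra_simps)
    ultimately show "r * x \<in> J"
      using J_intro M_ideal unfolding is_ideal_def by metis
  qed
  moreover have "M \<subseteq> J"
    using J_intro[of _ 0] by auto
  moreover have "a \<in> J"
    using J_intro[of 0 1] M_ideal by (simp add: is_ideal_def)
  ultimately have "J = UNIV"
    using M a unfolding maximal_ideal_def by blast
  then show thesis
    using that unfolding J_def by blast
qed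

lemma unit_add_nilpotent:
  fixes u z :: "'a::comm_ring_1"
  assumes u: "u * w = 1" and z: "z ^ m = 0"
  shows "\<exists>w'. (u + z) * w' = 1"
proof -
  define y where "y = w * z"
  define s where "s = (\<Sum>i<m. (- y) ^ i)"
  have "(- y) ^ m = 0"
    using z by (metis power_minus power_mult_distrib y_def mult_zero_right)
  then have geometric: "(1 + y) * s = 1"
    using one_diff_power_eq[of "- y" m] by (simp add: s_def)
  have "u * (1 + y) = u + (u * w) * z"
    by (simp add: y_def distrib_left mult.assoc)
  then have "u + z = u * (1 + y)"
    using u by simp
  then have "(u + z) * (w * s) = (u * w) * ((1 + y) * s)"
    by (simp only: ac_simps)
  then show ?thesis
    using u geometric by auto
qed

lemma power_times_unit_decomposition:
  fixes x :: "'a::comm_ring_1"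
  assumes nilpotent: "x ^ m = 0"
    and local: "\<And>a. (\<exists>r. a = r * x) \<or> (\<exists>w. a * w = 1)"
    and "a \<noteq> 0"
  obtains v u w where "a = x ^ v * u" "u * w = 1"
proof -
  have "(\<exists>r. a = r * x ^ j) \<or> (\<exists>v u w. a = x ^ v * u \<and> u * w = 1)" for j
  proof (induction j)
    case 0
    show ?case
      by simp
  next
    case (Suc j)
    then show ?case
    proof
      assume "\<exists>r. a = r * x ^ j"
      then obtain r where r: "a = r * x ^ j"
        by blast
      from local[of r] show ?case
      proof
        assume "\<exists>s. r = s * x"
        then show ?case
          using r by (auto simp: algebra_simps)
      next
        assume "\<exists>w. r * w = 1"
        moreover have "a = x ^ j * r"
          using r by (simp add: mult.commute)
        ultimately show ?case
          by blast
      qed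
    qed blast
  qed
  from this[of m] show thesis
    using that nilpotent \<open>a \<noteq> 0\<close> by auto
qed

lemma principal_ideal_ring_nilpotent_generator:
  fixes x :: "'a::comm_ring_1"
  assumes nilpotent: "x ^ m = 0"
    and local: "\<And>a. (\<exists>r. a = r * x) \<or> (\<exists>w. a * w = 1)"
  shows "principal_ideal_ring TYPE('a)"
  unfolding principal_ideal_ring_def
proof (intro allI impI)
  fix I :: "'a set"
  assume I: "is_ideal I"
  have power_in_ideal: "\<exists>v u. b = u * x ^ v \<and> x ^ v \<in> I" if "b \<in> I" "b \<noteq> 0" for b
  proof -
    obtain v u w where vuw: "b = x ^ v * u" "u * w = 1"
      using power_times_unit_decomposition[OF nilpotent local \<open>b \<noteq> 0\<close>] by blast
    have "x ^ v = w * b"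
      using vuw by (metis mult.commute mult.left_commute mult_1_right)
    then have "x ^ v \<in> I"
      using I \<open>b \<in> I\<close> unfolding is_ideal_def by simp
    then show ?thesis
      using vuw by (auto simp: mult.commute)
  qed
  show "\<exists>a. I = {r * a | r. True}"
  proof (cases "I \<subseteq> {0}")
    case True
    then have "I = {r * 0 | r. True}"
      using I unfolding is_ideal_def by auto
    then show ?thesis
      by blast
  next
    case False
    then obtain v where "x ^ v \<in> I"
      using power_in_ideal by blast
    define v0 where "v0 = (LEAST v. x ^ v \<in> I)"
    have v0: "x ^ v0 \<in> I"
      unfolding v0_def using \<open>x ^ v \<in> I\<close> by (rule LeastI)
    have "I \<subseteq> {r * x ^ v0 | r. True}"
    proof
      fix b assume "b \<in> I"
      show "b \<in> {r * x ^ v0 | r. True}"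
      proof (cases "b = 0")
        case False
        then obtain v u where vu: "b = u * x ^ v" "x ^ v \<in> I"
          using power_in_ideal \<open>b \<in> I\<close> by blast
        have "v0 \<le> v"
          unfolding v0_def using vu(2) by (rule Least_le)
        then have "b = (u * x ^ (v - v0)) * x ^ v0"
          using vu by (simp add: mult.assoc flip: power_add)
        then show ?thesis
          by blast
      qed (auto intro: exI[of _ 0])
    qed
    moreover have "{r * x ^ v0 | r. True} \<subseteq> I"
      using I v0 unfolding is_ideal_def by blast
    ultimately show ?thesis
      by blast
  qed
qed

section \<open>Algebras over a field\<close>

locale comm_algebra = vector_space scale
  for scale :: "'k::field \<Rightarrow> 'a::comm_ring_1 \<Rightarrow> 'a" +
  assumes scale_mult_left: "scale c (x * y) = scale c x * y"
begin

definition of_scalar :: "'k \<Rightarrow> 'a"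
  where "of_scalar c = scale c 1"

lemma scale_eq_of_scalar_mult: "scale c x = of_scalar c * x"
  using scale_mult_left[of c 1 x] by (simp add: of_scalar_def)

lemma of_scalar_0 [simp]: "of_scalar 0 = 0"
  and of_scalar_1 [simp]: "of_scalar 1 = 1"
  and of_scalar_add: "of_scalar (c + d) = of_scalar c + of_scalar d"
  and of_scalar_minus: "of_scalar (- c) = - of_scalar c"
  and of_scalar_diff: "of_scalar (c - d) = of_scalar c - of_scalar d"
  and of_scalar_eq_iff [simp]: "of_scalar c = of_scalar d \<longleftrightarrow> c = d"
  by (simp_all add: of_scalar_def scale_left_distrib scale_left_diff_distrib)

lemma of_scalar_mult: "of_scalar (c * d) = of_scalar c * of_scalar d"
proof -
  have "of_scalar (c * d) = scale c (of_scalar d)"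
    by (simp add: of_scalar_def)
  then show ?thesis
    by (simp only: scale_eq_of_scalar_mult)
qed

lemma of_scalar_eq_0_iff [simp]: "of_scalar c = 0 \<longleftrightarrow> c = 0"
  using of_scalar_eq_iff[of c 0] by simp

lemma map_poly_of_scalar_diff:
  "map_poly of_scalar (p - q) = map_poly of_scalar p - map_poly of_scalar q"
  by (rule poly_eqI) (simp add: coeff_map_poly of_scalar_diff)

lemma map_poly_of_scalar_linear_factor:
  "map_poly of_scalar ([:- c, 1:] * q) = [:- of_scalar c, 1:] * map_poly of_scalar q"
  by (rule poly_eqI)
    (auto simp: coeff_map_poly coeff_pCons of_scalar_diff of_scalar_mult of_scalar_minus
      split: nat.split)

lemma eq_of_scalar_if_root:
  assumes "alg_closed TYPE('k)"
    and "p \<noteq> 0" and "poly (map_poly of_scalar p) a = 0"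
    and units: "\<And>c. a \<noteq> of_scalar c \<Longrightarrow> \<exists>w. w * (a - of_scalar c) = 1"
  shows "\<exists>c. a = of_scalar c"
  using assms(2,3)
proof (induction "degree p" arbitrary: p rule: less_induct)
  case less
  show ?case
  proof (cases "degree p = 0")
    case True
    then obtain c where "p = [:c:]"
      using degree_eq_zeroE by blast
    then show ?thesis
      using less.prems by (simp add: map_poly_pCons)
  next
    case False
    then obtain c where "poly p c = 0"
      using \<open>alg_closed TYPE('k)\<close> unfolding alg_closed_def by force
    then obtain q where q: "p = [:- c, 1:] * q"
      by (metis dvdE poly_eq_0_iff_dvd)
    with less.prems have "q \<noteq> 0"
      by auto
    then have "degree q < degree p"
      unfolding q by (subst degree_mult_eq) auto
    have root: "(a - of_scalar c) * poly (map_poly of_scalar q) a = 0"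
      using less.prems(2) unfolding q map_poly_of_scalar_linear_factor by (simp add: algebra_simps)
    show ?thesis
    proof (cases "a = of_scalar c")
      case False
      then obtain w where "w * (a - of_scalar c) = 1"
        using units by blast
      with root have "poly (map_poly of_scalar q) a = 0"
        by (metis mult.assoc mult_1 mult_zero_right)
      then show ?thesis
        using less.hyps \<open>degree q < degree p\<close> \<open>q \<noteq> 0\<close> by blast
    qed blast
  qed
qed

end

locale fd_comm_algebra = comm_algebra scale
  for scale :: "'k::field \<Rightarrow> 'a::comm_ring_1 \<Rightarrow> 'a" +
  assumes finite_spanning_set: "\<exists>B. finite B \<and> span B = UNIV"
begin

lemma algebraic_over_scalars: "\<exists>p. p \<noteq> 0 \<and> poly (map_poly of_scalar p) a = 0"
proof -
  obtain B where B: "finite B" "span B = UNIV"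
    using finite_spanning_set by blast
  define d where "d = card B"
  show ?thesis
  proof (cases "inj_on (\<lambda>i. a ^ i) {..d}")
    case False
    then obtain i j where "i \<noteq> j" "a ^ i = a ^ j"
      unfolding inj_on_def by blast
    moreover have "coeff (monom 1 i - monom 1 j :: 'k poly) i \<noteq> 0"
      using \<open>i \<noteq> j\<close> by simp
    then have "monom 1 i - monom 1 j \<noteq> (0 :: 'k poly)"
      by (metis coeff_0)
    ultimately show ?thesis
      by (intro exI[of _ "monom 1 i - monom 1 j"])
        (simp add: map_poly_monom poly_monom map_poly_of_scalar_diff)
  next
    case True
    define S where "S = (\<lambda>i. a ^ i) ` {..d}"
    have "finite S" "card S = d + 1"
      using True by (simp_all add: S_def card_image)
    have "dependent S"
    proof (rule ccontr)
      assume "independent S"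
      then have "card S \<le> card B"
        using independent_span_bound[OF B(1), of S] B(2) by simp
      with \<open>card S = d + 1\<close> show False
        by (simp add: d_def)
    qed
    then obtain u v where uv: "v \<in> S" "u v \<noteq> 0" "(\<Sum>v\<in>S. scale (u v) v) = 0"
      using dependent_finite[OF \<open>finite S\<close>] by blast
    define p :: "'k poly" where "p = (\<Sum>i\<le>d. monom (u (a ^ i)) i)"
    obtain i where "i \<le> d" "v = a ^ i"
      using uv(1) S_def by auto
    then have "coeff p i \<noteq> 0"
      using uv(2) by (simp add: p_def coeff_sum)
    then have "p \<noteq> 0"
      by (metis coeff_0)
    have "map_poly of_scalar p = (\<Sum>i\<le>d. monom (of_scalar (u (a ^ i))) i)"
      by (rule poly_eqI) (simp add: p_def coeff_map_poly coeff_sum coeff_monom)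
    then have "poly (map_poly of_scalar p) a = (\<Sum>v\<in>S. scale (u v) v)"
      using True by (simp add: S_def poly_sum poly_monom scale_eq_of_scalar_mult sum.reindex)
    with \<open>p \<noteq> 0\<close> uv(3) show ?thesis
      by auto
  qed
qed

end

lemma fd_comm_algebra_if_fd_algebra: "fd_algebra scale \<Longrightarrow> fd_comm_algebra scale"
  unfolding fd_algebra_def fd_comm_algebra_def fd_comm_algebra_axioms_def comm_algebra_def
    comm_algebra_axioms_def
  by blast

section \<open>Graded algebras\<close>

locale graded_algebra = comm_algebra scale
  for scale :: "'k::field \<Rightarrow> 'a::comm_ring_1 \<Rightarrow> 'a" +
  fixes G :: "nat \<Rightarrow> 'a set" and n :: nat
  assumes subspace_G: "module.subspace scale (G i)"
    and mult_G: "x \<in> G i \<Longrightarrow> y \<in> G j \<Longrightarrow> x * y \<in> G (i + j)"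
    and G_above_top: "n < i \<Longrightarrow> G i = {0}"
    and unique_decomposition: "\<exists>!f. (\<forall>i. f i \<in> G i) \<and> x = (\<Sum>i\<le>n. f i)"
begin

lemmas zero_G = subspace_0[OF subspace_G]
  and add_G = subspace_add[OF subspace_G]
  and scale_G = subspace_scale[OF subspace_G]
  and diff_G = subspace_diff[OF subspace_G]

definition hcomp :: "'a \<Rightarrow> nat \<Rightarrow> 'a"
  where "hcomp x = (THE f. (\<forall>i. f i \<in> G i) \<and> x = (\<Sum>i\<le>n. f i))"

lemma hcomp_in_G: "hcomp x i \<in> G i"
  and sum_hcomp: "(\<Sum>i\<le>n. hcomp x i) = x"
  using theI'[OF unique_decomposition[of x]] unfolding hcomp_def by auto

lemma hcomp_unique: "(\<And>i. f i \<in> G i) \<Longrightarrow> x = (\<Sum>i\<le>n. f i) \<Longrightarrow> hcomp x = f"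
  unfolding hcomp_def by (rule the1_equality[OF unique_decomposition]) auto

lemma hcomp_above_top: "n < i \<Longrightarrow> hcomp x i = 0"
  using G_above_top hcomp_in_G by blast

lemma sum_hcomp_atMost:
  assumes "n \<le> m" shows "(\<Sum>i\<le>m. hcomp x i) = x"
proof -
  have "(\<Sum>i\<le>m. hcomp x i) = (\<Sum>i\<le>n. hcomp x i)"
    using assms by (intro sum.mono_neutral_right) (auto simp: hcomp_above_top)
  then show ?thesis
    by (simp add: sum_hcomp)
qed

lemma hcomp_0: "hcomp 0 i = 0"
  using hcomp_unique[of "\<lambda>_. 0" 0] zero_G by simp

lemma hcomp_add: "hcomp (x + y) i = hcomp x i + hcomp y i"
proof -
  have "hcomp (x + y) = (\<lambda>i. hcomp x i + hcomp y i)"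
    by (rule hcomp_unique) (simp_all add: add_G hcomp_in_G sum.distrib sum_hcomp)
  then show ?thesis
    by simp
qed

lemma hcomp_scale: "hcomp (scale c x) i = scale c (hcomp x i)"
proof -
  have "hcomp (scale c x) = (\<lambda>i. scale c (hcomp x i))"
    by (rule hcomp_unique) (simp_all add: scale_G hcomp_in_G sum_hcomp flip: scale_sum_right)
  then show ?thesis
    by simp
qed

lemma hcomp_diff: "hcomp (x - y) i = hcomp x i - hcomp y i"
  using hcomp_add[of x "- y" i] hcomp_scale[of "- 1" y i] by simp

lemma hcomp_sum: "finite S \<Longrightarrow> hcomp (sum g S) i = (\<Sum>s\<in>S. hcomp (g s) i)"
  by (induction S rule: finite_induct) (simp_all add: hcomp_0 hcomp_add)

lemma hcomp_homogeneous:
  assumes "x \<in> G j"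
  shows "hcomp x i = (if i = j then x else 0)"
proof (cases "j \<le> n")
  case True
  have "x = (\<Sum>i\<le>n. if i = j then x else 0)"
    using True by simp
  then have "hcomp x = (\<lambda>i. if i = j then x else 0)"
    by (intro hcomp_unique) (simp_all add: assms zero_G)
  then show ?thesis
    by simp
next
  case False
  then show ?thesis
    using assms G_above_top[of j] by (simp add: hcomp_0)
qed

lemma hcomp_mult: "hcomp (x * y) j = (\<Sum>a\<le>j. hcomp x a * hcomp y (j - a))"
proof -
  define m where "m = n + j"
  have "x * y = (\<Sum>a\<le>m. hcomp x a) * (\<Sum>b\<le>m. hcomp y b)"
    by (simp add: m_def sum_hcomp_atMost)
  then have "x * y = (\<Sum>a\<le>m. \<Sum>b\<le>m. hcomp x a * hcomp y b)"
    by (simp add: sum_product)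
  then have "hcomp (x * y) j = (\<Sum>a\<le>m. \<Sum>b\<le>m. hcomp (hcomp x a * hcomp y b) j)"
    by (simp add: hcomp_sum)
  also have "\<dots> = (\<Sum>a\<le>m. \<Sum>b\<le>m.
      if a \<le> j then (if b = j - a then hcomp x a * hcomp y b else 0) else 0)"
    by (intro sum.cong refl) (auto simp: hcomp_homogeneous[OF mult_G[OF hcomp_in_G hcomp_in_G]])
  also have "\<dots> = (\<Sum>a\<le>m. if a \<le> j then hcomp x a * hcomp y (j - a) else 0)"
    by (intro sum.cong refl) (auto simp: m_def)
  also have "\<dots> = (\<Sum>a\<in>{a\<in>{..m}. a \<le> j}. hcomp x a * hcomp y (j - a))"
    by (rule sum.inter_filter[symmetric]) simp
  also have "{a\<in>{..m}. a \<le> j} = {..j}"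
    by (auto simp: m_def)
  finally show ?thesis .
qed

lemma hcomp_mult_0: "hcomp (x * y) 0 = hcomp x 0 * hcomp y 0"
  by (simp add: hcomp_mult)

lemma hcomp_mult_1: "hcomp (x * y) 1 = hcomp x 0 * hcomp y 1 + hcomp x 1 * hcomp y 0"
  by (simp add: hcomp_mult)

lemma one_in_G0: "1 \<in> G 0"
proof -
  define e where "e = hcomp 1 0"
  have e_mult_homogeneous: "e * y = y" if "y \<in> G j" for y j
  proof -
    have "y = hcomp (1 * y) j"
      using hcomp_homogeneous[OF that] by simp
    also have "\<dots> = (\<Sum>a\<le>j. if a = 0 then e * y else 0)"
      unfolding hcomp_mult e_def by (intro sum.cong refl) (auto simp: hcomp_homogeneous[OF that])
    finally show ?thesis
      by simp
  qed
  have "e * x = x" for x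
  proof -
    have "e * x = (\<Sum>i\<le>n. e * hcomp x i)"
      by (simp add: sum_hcomp flip: sum_distrib_left)
    then show ?thesis
      by (simp add: e_mult_homogeneous[OF hcomp_in_G] sum_hcomp)
  qed
  from this[of 1] have "hcomp 1 0 = 1"
    by (simp add: e_def)
  then show ?thesis
    using hcomp_in_G[of 1 0] by simp
qed

lemma hcomp_one: "hcomp 1 i = (if i = 0 then 1 else 0)"
  by (simp add: hcomp_homogeneous[OF one_in_G0])

lemma of_scalar_in_G0: "of_scalar c \<in> G 0"
  unfolding of_scalar_def by (rule scale_G[OF one_in_G0])

lemma power_in_G:
  assumes "x \<in> G 1" shows "x ^ i \<in> G i"
proof (induction i)
  case 0
  show ?case
    by (simp add: one_in_G0)
next
  case (Suc i)
  show ?case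
    using mult_G[OF assms Suc.IH] by simp
qed

lemma nilpotent_G1: "x \<in> G 1 \<Longrightarrow> x ^ Suc n = 0"
  using G_above_top[of "Suc n"] power_in_G by blast

lemma irrelevant_eq: "irrelevant G = {x. hcomp x 0 = 0}"
proof safe
  fix x assume "x \<in> irrelevant G"
  then obtain f m where f: "\<forall>i. f i \<in> G i" "f 0 = 0" "x = (\<Sum>i\<le>m. f i)"
    unfolding irrelevant_def by blast
  have "hcomp (f i) 0 = 0" for i
    using f(1,2) hcomp_homogeneous[of "f i" i 0] by (cases "i = 0") (auto simp: hcomp_0)
  then show "hcomp x 0 = 0"
    using f(3) by (simp add: hcomp_sum)
next
  fix x assume "hcomp x 0 = 0"
  then show "x \<in> irrelevant G"
    unfolding irrelevant_def
    by (intro CollectI exI[of _ "hcomp x"] exI[of _ n]) (simp add: hcomp_in_G sum_hcomp)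
qed

lemma dim_trunc_hom_image_above_top:
  assumes "trunc_hom scale N \<alpha>" and "n < i"
  shows "smult_vs.dim (\<alpha> ` G i) = 0"
proof -
  have "\<alpha> 0 = 0"
    using assms(1) unfolding trunc_hom_def by (metis scale_zero_left smult_0_left)
  then have "\<alpha> ` G i \<subseteq> smult_vs.span {}"
    using G_above_top[OF assms(2)] by simp
  then show ?thesis
    using smult_vs.dim_le_card[of _ "{}"] by simp
qed

end

section \<open>Standard graded algebras\<close>

locale standard_graded_algebra = graded_algebra scale G n + fd_comm_algebra scale
  for scale :: "'k::field \<Rightarrow> 'a::comm_ring_1 \<Rightarrow> 'a" and G n +
  assumes maximal_irrelevant: "maximal_ideal (irrelevant G)"
    and irrelevant_generated: "irrelevant G = ideal_generated (G 1)"
begin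

lemma invertible_G0:
  assumes "a \<in> G 0" and "a \<noteq> 0"
  shows "\<exists>b. b * a = 1"
proof -
  have "a \<notin> irrelevant G"
    using assms by (simp add: irrelevant_eq hcomp_homogeneous)
  then obtain m r where "m \<in> irrelevant G" "1 = m + r * a"
    using maximal_ideal_invertible_modulo[OF maximal_irrelevant] by blast
  have "1 = hcomp (m + r * a) 0"
    unfolding \<open>1 = m + r * a\<close>[symmetric] by (simp add: hcomp_one)
  also have "\<dots> = hcomp r 0 * a"
    using \<open>m \<in> irrelevant G\<close> assms(1)
    by (simp add: hcomp_add hcomp_mult_0 irrelevant_eq hcomp_homogeneous)
  finally show ?thesis
    by metis
qed

lemma principal_ideal_ring_if_G1_cyclic:
  assumes x: "x \<in> G 1" and G1: "G 1 \<subseteq> span {x}"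
  shows "principal_ideal_ring TYPE('a)"
proof -
  let ?X = "{r * x | r. True}"
  have "is_ideal ?X"
    unfolding is_ideal_def
  proof (intro conjI ballI allI)
    have "0 = 0 * x"
      by simp
    then show "0 \<in> ?X"
      by blast
  next
    fix a b assume "a \<in> ?X" "b \<in> ?X"
    then obtain ra rb where "a = ra * x" "b = rb * x"
      by blast
    then have "a + b = (ra + rb) * x"
      by (simp add: distrib_right)
    then show "a + b \<in> ?X"
      by blast
  next
    fix r a assume "a \<in> ?X"
    then obtain ra where "a = ra * x"
      by blast
    then have "r * a = (r * ra) * x"
      by (simp add: mult.assoc)
    then show "r * a \<in> ?X"
      by blast
  qed
  moreover have "G 1 \<subseteq> ?X"
  proof
    fix z assume "z \<in> G 1"
    then obtain c where "z = scale c x"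
      using G1 by (auto simp: span_singleton)
    then show "z \<in> ?X"
      by (auto simp: scale_eq_of_scalar_mult)
  qed
  ultimately have "irrelevant G \<subseteq> ?X"
    unfolding irrelevant_generated ideal_generated_def by blast
  moreover have "?X \<subseteq> irrelevant G"
    using x by (auto simp: irrelevant_generated ideal_generated_def is_ideal_def)
  ultimately have irrelevant_principal: "irrelevant G = ?X"
    by blast
  have "(\<exists>r. a = r * x) \<or> (\<exists>w. a * w = 1)" for a
  proof (cases "hcomp a 0 = 0")
    case True
    then show ?thesis
      using irrelevant_principal by (auto simp: irrelevant_eq)
  next
    case False
    then obtain b where b: "hcomp a 0 * b = 1"
      using invertible_G0[OF hcomp_in_G] by (auto simp: mult.commute)
    have "a - hcomp a 0 \<in> irrelevant G"
      by (simp add: irrelevant_eq hcomp_diff hcomp_homogeneous[OF hcomp_in_G])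
    then obtain s where "a - hcomp a 0 = s * x"
      using irrelevant_principal by blast
    then have a: "a = hcomp a 0 + s * x"
      by (simp add: algebra_simps)
    have "(s * x) ^ Suc n = 0"
      by (simp only: power_mult_distrib nilpotent_G1[OF x] mult_zero_right)
    then obtain w where "(hcomp a 0 + s * x) * w = 1"
      using unit_add_nilpotent[OF b] by blast
    then show ?thesis
      using a by auto
  qed
  then show ?thesis
    by (rule principal_ideal_ring_nilpotent_generator[OF nilpotent_G1[OF x]])
qed

lemma independent_pair_in_G1:
  assumes "\<not> principal_ideal_ring TYPE('a)"
  obtains x y where "x \<in> G 1" "y \<in> G 1" "x \<noteq> y" "independent {x, y}"
proof -
  obtain B where B: "B \<subseteq> G 1" "independent B" "G 1 \<subseteq> span B"
    using maximal_independent_subset by blast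
  show thesis
  proof (cases "\<exists>x\<in>B. \<exists>y\<in>B. x \<noteq> y")
    case True
    then obtain x y where "x \<in> B" "y \<in> B" "x \<noteq> y"
      by blast
    then show thesis
      using that B(1) independent_mono[OF B(2), of "{x, y}"] by auto
  next
    case False
    then obtain x where "x \<in> G 1" "B \<subseteq> {x}"
      using B(1) zero_G[of 1] by blast
    then have "G 1 \<subseteq> span {x}"
      using B(3) span_mono by blast
    with \<open>x \<in> G 1\<close> show thesis
      using principal_ideal_ring_if_G1_cyclic assms by blast
  qed
qed

text \<open>The choice in \<open>scalar_part\<close> is only meaningful once \<open>A\<^sub>0 = k\<close>, i.e. under the
  algebraic closure assumed below.\<close>

definition scalar_part :: "'a \<Rightarrow> 'k"
  where "scalar_part a = (THE c. hcomp a 0 = of_scalar c)"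

context
  assumes alg_closed: "alg_closed TYPE('k)"
begin

lemma G0_eq_of_scalar:
  assumes "a \<in> G 0"
  shows "\<exists>c. a = of_scalar c"
proof -
  obtain p where "p \<noteq> 0" "poly (map_poly of_scalar p) a = 0"
    using algebraic_over_scalars by blast
  moreover have "\<exists>w. w * (a - of_scalar c) = 1" if "a \<noteq> of_scalar c" for c
    using invertible_G0[OF diff_G[OF assms of_scalar_in_G0]] that by simp
  ultimately show ?thesis
    using eq_of_scalar_if_root[OF alg_closed] by blast
qed

lemma of_scalar_scalar_part: "of_scalar (scalar_part a) = hcomp a 0"
proof -
  obtain c where "hcomp a 0 = of_scalar c"
    using G0_eq_of_scalar[OF hcomp_in_G] by blast
  then show ?thesis
    by (simp add: scalar_part_def)
qed

lemma scalar_part_add: "scalar_part (a + b) = scalar_part a + scalar_part b"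
proof -
  have "of_scalar (scalar_part (a + b)) = of_scalar (scalar_part a + scalar_part b)"
    unfolding of_scalar_add of_scalar_scalar_part hcomp_add ..
  then show ?thesis
    by simp
qed

lemma scalar_part_scale: "scalar_part (scale c a) = c * scalar_part a"
proof -
  have "of_scalar (scalar_part (scale c a)) = of_scalar (c * scalar_part a)"
    unfolding of_scalar_mult of_scalar_scalar_part hcomp_scale by (rule scale_eq_of_scalar_mult)
  then show ?thesis
    by simp
qed

lemma scalar_part_mult: "scalar_part (a * b) = scalar_part a * scalar_part b"
proof -
  have "of_scalar (scalar_part (a * b)) = of_scalar (scalar_part a * scalar_part b)"
    unfolding of_scalar_mult of_scalar_scalar_part hcomp_mult_0 ..
  then show ?thesis
    by simp
qed

lemma scalar_part_one: "scalar_part 1 = 1"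
proof -
  have "of_scalar (scalar_part 1) = of_scalar 1"
    unfolding of_scalar_scalar_part hcomp_one by simp
  then show ?thesis
    by (simp only: of_scalar_eq_iff)
qed

lemma scalar_part_eq_0: "a \<in> G i \<Longrightarrow> 0 < i \<Longrightarrow> scalar_part a = 0"
  using of_scalar_scalar_part[of a] by (simp add: hcomp_homogeneous)

lemma trunc_hom_from_degree_one_functionals:
  assumes f_add: "\<And>u v. f (u + v) = f u + f v" and f_scale: "\<And>c u. f (scale c u) = c * f u"
    and g_add: "\<And>u v. g (u + v) = g u + g v" and g_scale: "\<And>c u. g (scale c u) = c * g u"
  shows "trunc_hom scale 3 (\<lambda>a. [:scalar_part a, 0, f (hcomp a 1), g (hcomp a 1):])"
  unfolding trunc_hom_def
proof (intro conjI allI)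
  fix a
  show "[:scalar_part a, 0, f (hcomp a 1), g (hcomp a 1):] mod [:0, 1:] ^ (3 + 1) =
      [:scalar_part a, 0, f (hcomp a 1), g (hcomp a 1):]"
    by (simp add: mod_X_power_eq_self)
next
  fix a b
  show "[:scalar_part (a + b), 0, f (hcomp (a + b) 1), g (hcomp (a + b) 1):] =
      [:scalar_part a, 0, f (hcomp a 1), g (hcomp a 1):] +
      [:scalar_part b, 0, f (hcomp b 1), g (hcomp b 1):]"
    by (simp add: scalar_part_add hcomp_add f_add g_add)
next
  fix c a
  show "[:scalar_part (scale c a), 0, f (hcomp (scale c a) 1), g (hcomp (scale c a) 1):] =
      smult c [:scalar_part a, 0, f (hcomp a 1), g (hcomp a 1):]"
    by (simp add: scalar_part_scale hcomp_scale f_scale g_scale)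
next
  have "f 0 = 0" "g 0 = 0"
    using f_scale[of 0 0] g_scale[of 0 0] by simp_all
  then show "[:scalar_part 1, 0, f (hcomp 1 1), g (hcomp 1 1):] = 1"
    by (simp add: scalar_part_one hcomp_one one_pCons)
next
  fix a b
  have "hcomp (a * b) 1 = scale (scalar_part a) (hcomp b 1) + scale (scalar_part b) (hcomp a 1)"
    unfolding hcomp_mult_1 scale_eq_of_scalar_mult of_scalar_scalar_part by (simp add: mult.commute)
  moreover have "(3 + 1 :: nat) = 4"
    by simp
  ultimately show "[:scalar_part (a * b), 0, f (hcomp (a * b) 1), g (hcomp (a * b) 1):] =
      [:scalar_part a, 0, f (hcomp a 1), g (hcomp a 1):] *
      [:scalar_part b, 0, f (hcomp b 1), g (hcomp b 1):] mod [:0, 1:] ^ (3 + 1)"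
    by (simp only: mult_mod_X4_no_linear_terms)
      (simp add: scalar_part_mult f_add f_scale g_add g_scale ac_simps)
qed

lemma ex_trunc_hom_dim_G1_eq_2:
  assumes "\<not> principal_ideal_ring TYPE('a)"
  shows "\<exists>\<alpha>. trunc_hom scale 3 \<alpha> \<and> smult_vs.dim (\<alpha> ` G 1) = 2"
proof -
  obtain x y where xy: "x \<in> G 1" "y \<in> G 1" "x \<noteq> y" "independent {x, y}"
    using independent_pair_in_G1[OF assms] by blast
  define E where "E = extend_basis {x, y}"
  have E: "independent E" "span E = UNIV" "{x, y} \<subseteq> E"
    using xy(4) extend_basis_superset[OF xy(4)]
    by (simp_all add: E_def independent_extend_basis span_extend_basis)
  define coord where "coord b a = representation E a b" for b a
  have coord_add: "coord b (u + v) = coord b u + coord b v" for b u v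
    unfolding coord_def using representation_add[OF E(1)] E(2) by simp
  have coord_scale: "coord b (scale c u) = c * coord b u" for b c u
    unfolding coord_def using representation_scale[OF E(1)] E(2) by simp
  have coord_basis: "coord x x = 1" "coord y x = 0" "coord x y = 0" "coord y y = 1"
    unfolding coord_def using representation_basis[OF E(1)] E(3) xy(3) by auto
  define \<alpha> where "\<alpha> a = [:scalar_part a, 0, coord x (hcomp a 1), coord y (hcomp a 1):]" for a
  have hom: "trunc_hom scale 3 \<alpha>"
    unfolding \<alpha>_def
    by (rule trunc_hom_from_degree_one_functionals[OF coord_add coord_scale coord_add coord_scale])
  have \<alpha>_G1: "\<alpha> a = smult (coord x a) [:0, 0, 1:] + smult (coord y a) [:0, 0, 0, 1:]"
    if "a \<in> G 1" for a
    using that by (simp add: \<alpha>_def scalar_part_eq_0 hcomp_homogeneous)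
  have "\<alpha> ` G 1 \<subseteq> smult_vs.span {[:0, 0, 1:], [:0, 0, 0, 1:]}"
  proof
    fix p assume "p \<in> \<alpha> ` G 1"
    then obtain a where "a \<in> G 1" "p = \<alpha> a"
      by blast
    show "p \<in> smult_vs.span {[:0, 0, 1:], [:0, 0, 0, 1:]}"
      unfolding \<open>p = \<alpha> a\<close> \<alpha>_G1[OF \<open>a \<in> G 1\<close>]
      by (intro smult_vs.span_add smult_vs.span_scale smult_vs.span_base) simp_all
  qed
  moreover have "{[:0, 0, 1:], [:0, 0, 0, 1:]} \<subseteq> \<alpha> ` G 1"
    using \<alpha>_G1 xy(1,2) coord_basis by (auto intro!: image_eqI)
  moreover have "smult_vs.independent {[:0, 0, 1:], [:0, 0, 0, 1 :: 'k:]}"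
    by (auto simp: smult_vs.independent_insert smult_vs.span_singleton)
  ultimately have "smult_vs.dim (\<alpha> ` G 1) = 2"
    using smult_vs.dim_unique[of "{[:0, 0, 1:], [:0, 0, 0, 1:]}" "\<alpha> ` G 1" 2] by auto
  with hom show ?thesis
    by blast
qed

end

end

lemma standard_graded_algebra_if_standard_graded:
  assumes "fd_algebra scale" and "standard_graded scale G"
  obtains n where "standard_graded_algebra scale G n"
proof -
  interpret fd_comm_algebra scale
    by (rule fd_comm_algebra_if_fd_algebra[OF assms(1)])
  obtain n where "\<forall>i>n. G i = {0}" "\<forall>x. \<exists>!f. (\<forall>i. f i \<in> G i) \<and> x = (\<Sum>i\<le>n. f i)"
    using assms(2) unfolding standard_graded_def graded_def by blast
  with assms(2) have "standard_graded_algebra scale G n"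
    by unfold_locales (auto simp: standard_graded_def graded_def)
  then show thesis
    by (rule that)
qed

theorem lemma2p3:
  fixes scale :: "'k::field_char_0 \<Rightarrow> 'a::comm_ring_1 \<Rightarrow> 'a"
    and G :: "nat \<Rightarrow> 'a set"
  assumes "alg_closed TYPE('k)"
    and "fd_algebra scale"
    and "standard_graded scale G"
    and "\<not> principal_ideal_ring TYPE('a)"
  shows "finite {i::nat. \<exists>N \<alpha>. trunc_hom scale N \<alpha> \<and>
                   vector_space.dim (smult :: 'k \<Rightarrow> 'k poly \<Rightarrow> 'k poly) (\<alpha> ` G i) \<ge> 2}
       \<and> {i::nat. \<exists>N \<alpha>. trunc_hom scale N \<alpha> \<and>
                   vector_space.dim (smult :: 'k \<Rightarrow> 'k poly \<Rightarrow> 'k poly) (\<alpha> ` G i) \<ge> 2} \<noteq> {}"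
    (is "finite ?E \<and> ?E \<noteq> {}")
proof -
  obtain n where "standard_graded_algebra scale G n"
    using standard_graded_algebra_if_standard_graded[OF assms(2,3)] .
  then interpret standard_graded_algebra scale G n .
  have "?E \<subseteq> {..n}"
  proof
    fix i assume "i \<in> ?E"
    then obtain N \<alpha> where "trunc_hom scale N \<alpha>" "2 \<le> smult_vs.dim (\<alpha> ` G i)"
      by blast
    then show "i \<in> {..n}"
      using dim_trunc_hom_image_above_top[of N \<alpha> i] by (cases "n < i") auto
  qed
  moreover have "1 \<in> ?E"
    using ex_trunc_hom_dim_G1_eq_2[OF assms(1,4)] by force
  ultimately show ?thesis
    using finite_subset by blast
qed

end
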